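(* Let $A$ be a Noetherian integral domain whose field of fractions $K$ is infinite, let $M$ be a finitely generated torsion-free $A$-module with $n=\dim_K(K\otimes_A M)\ge 2$. Let $\operatorname{GP}(M)$ be the simplicial complex whose simplices are the nonempty finite subsets $Y\subseteq M$ in general position, i.e. such that every subset of $Y$ with at most $n$ elements is linearly independent over $K$ (in $K\otimes_A M$). Then the geometric realisation of $\operatorname{GP}(M)$ is contractible. *)

theory Defs
  imports "HOL-Analysis.Analysis" "HOL-Computational_Algebra.Fraction_Field"
begin

definition emb :: "'a::idom \<Rightarrow> 'a fract" where
  "emb a = Fract a 1"

definition is_ideal :: "'a::comm_ring_1 set \<Rightarrow> bool" where
  "is_ideal I \<longleftrightarrow> 0 \<in> I \<and> (\<forall>x\<in>I. \<forall>y\<in>I. x + y \<in> I) \<and> (\<forall>a x. x \<in> I \<longrightarrow> a * x \<in> I)"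

definition noetherian :: "'a::comm_ring_1 itself \<Rightarrow> bool" where
  "noetherian TYPE('a) \<longleftrightarrow>
     (\<forall>I::'a set. is_ideal I \<longrightarrow>
        (\<exists>F. finite F \<and> F \<subseteq> I \<and> I = {\<Sum>x\<in>F. c x * x | c. True}))"

text \<open>An A-submodule M of a K-vector space V (K = Frac A), where the
  K-vector space structure is given by sc.\<close>
definition A_submodule :: "('a::idom fract \<Rightarrow> 'v::ab_group_add \<Rightarrow> 'v) \<Rightarrow> 'v set \<Rightarrow> bool" where
  "A_submodule sc M \<longleftrightarrow> 0 \<in> M \<and> (\<forall>x\<in>M. \<forall>y\<in>M. x + y \<in> M)
      \<and> (\<forall>a x. x \<in> M \<longrightarrow> sc (emb a) x \<in> M)"

definition A_fin_gen :: "('a::idom fract \<Rightarrow> 'v::ab_group_add \<Rightarrow> 'v) \<Rightarrow> 'v set \<Rightarrow> bool" where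
  "A_fin_gen sc M \<longleftrightarrow>
     (\<exists>F. finite F \<and> F \<subseteq> M \<and> M = {\<Sum>x\<in>F. sc (emb (c x)) x | c. True})"

definition gp_simplices :: "('k::field \<Rightarrow> 'v::ab_group_add \<Rightarrow> 'v) \<Rightarrow> 'v set \<Rightarrow> 'v set set" where
  "gp_simplices sc M = {Y. Y \<noteq> {} \<and> finite Y \<and> Y \<subseteq> M \<and>
      (\<forall>Z\<subseteq>Y. card Z \<le> vector_space.dim sc M \<longrightarrow> \<not> module.dependent sc Z)}"

text \<open>Points are functions v \<Rightarrow> real (barycentric coordinates), nonnegative,
  with support a simplex and coordinates summing to 1.\<close>
definition real_carrier :: "'v set set \<Rightarrow> ('v \<Rightarrow> real) set" where
  "real_carrier S = {f. (\<forall>v. 0 \<le> f v) \<and> {v. f v \<noteq> 0} \<in> S \<and> sum f {v. f v \<noteq> 0} = 1}"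

definition real_face :: "'v set set \<Rightarrow> 'v set \<Rightarrow> ('v \<Rightarrow> real) set" where
  "real_face S \<sigma> = {f \<in> real_carrier S. {v. f v \<noteq> 0} \<subseteq> \<sigma>}"

text \<open>Weak (coherent) topology: U is open iff its trace on every closed simplex is
  open in the Euclidean topology of that simplex (= product topology restricted to
  functions supported in the finite set \<sigma>).\<close>
definition real_open :: "'v set set \<Rightarrow> ('v \<Rightarrow> real) set \<Rightarrow> bool" where
  "real_open S U \<longleftrightarrow> U \<subseteq> real_carrier S \<and>
     (\<forall>\<sigma>\<in>S. openin (subtopology (powertop_real UNIV) (real_face S \<sigma>)) (U \<inter> real_face S \<sigma>))"

lemma istopology_real_open: "istopology (real_open S)"
  unfolding istopology_def
proof safe
  fix U W assume u0: "real_open S U" and w0: "real_open S W"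
  show "real_open S (U \<inter> W)"
    unfolding real_open_def
  proof (intro conjI ballI)
    show "U \<inter> W \<subseteq> real_carrier S" using u0 unfolding real_open_def by blast
  next
    fix \<sigma> assume s: "\<sigma> \<in> S"
    have e: "U \<inter> W \<inter> real_face S \<sigma> = (U \<inter> real_face S \<sigma>) \<inter> (W \<inter> real_face S \<sigma>)" by blast
    show "openin (subtopology (powertop_real UNIV) (real_face S \<sigma>)) (U \<inter> W \<inter> real_face S \<sigma>)"
      unfolding e using u0 w0 s unfolding real_open_def by (auto intro!: openin_Int[of _ "U \<inter> real_face S \<sigma>" "W \<inter> real_face S \<sigma>"])
  qed
next
  fix \<K> assume h: "\<forall>K\<in>\<K>. real_open S K"
  show "real_open S (\<Union>\<K>)"
    unfolding real_open_def
  proof safe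
    fix x K assume "x \<in> K" "K \<in> \<K>" then show "x \<in> real_carrier S"
      using h unfolding real_open_def by blast
  next
    fix \<sigma> assume "\<sigma> \<in> S"
    have "\<Union>\<K> \<inter> real_face S \<sigma> = \<Union>((\<lambda>K. K \<inter> real_face S \<sigma>) ` \<K>)" by blast
    moreover have "\<forall>T\<in>(\<lambda>K. K \<inter> real_face S \<sigma>) ` \<K>.
        openin (subtopology (powertop_real UNIV) (real_face S \<sigma>)) T"
      using h \<open>\<sigma> \<in> S\<close> unfolding real_open_def by blast
    ultimately show "openin (subtopology (powertop_real UNIV) (real_face S \<sigma>)) (\<Union>\<K> \<inter> real_face S \<sigma>)"
      by (metis openin_Union)
  qed
qed

definition realisation :: "'v set set \<Rightarrow> ('v \<Rightarrow> real) topology" where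
  "realisation S = topology (real_open S)"

end

(*
  Well-order M in order type |M|. Since M is finitely generated, |M| \<le> |A|, and A is
  infinite; so transfinite recursion yields g : M \<rightarrow> M such that g y lies outside the span of
  every set of fewer than n independent vectors taken from w, y, the predecessors of y and
  their images under g (for a fixed nonzero w \<in> M). Such a point exists on the curve
  a \<mapsto> \<Sum> a^i b_i through a basis (b_i), which meets each of the fewer than |A| relevant
  subspaces in finitely many points. Consequently, for every simplex \<sigma>, the set P \<union> g(Q) is a
  simplex whenever P, Q \<subseteq> \<sigma> and P lies below Q, and so is {w} \<union> g(\<sigma>). Straight-line
  prism homotopies between such contiguous vertex maps then deform the identity of the
  realisation into g and g into the constant map at w.
*)

theory Submission
  imports Defs "HOL-Computational_Algebra.Polynomial"
begin

unbundle cardinal_syntax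

section \<open>Simplicial complexes and their weak topology\<close>

definition simplicial_complex :: "'v set set \<Rightarrow> bool" where
  "simplicial_complex S \<longleftrightarrow>
     (\<forall>\<sigma>\<in>S. finite \<sigma> \<and> \<sigma> \<noteq> {} \<and> (\<forall>\<tau>. \<tau> \<subseteq> \<sigma> \<and> \<tau> \<noteq> {} \<longrightarrow> \<tau> \<in> S))"

lemma simplicial_complex_finite: "simplicial_complex S \<Longrightarrow> \<sigma> \<in> S \<Longrightarrow> finite \<sigma>"
  by (simp add: simplicial_complex_def)

lemma simplicial_complex_subset:
  "simplicial_complex S \<Longrightarrow> \<sigma> \<in> S \<Longrightarrow> \<tau> \<subseteq> \<sigma> \<Longrightarrow> \<tau> \<noteq> {} \<Longrightarrow> \<tau> \<in> S"
  unfolding simplicial_complex_def by blast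

lemma openin_realisation: "openin (realisation S) = real_open S"
  unfolding realisation_def using istopology_real_open topology_inverse' by blast

lemma real_open_carrier: "real_open S (real_carrier S)"
  unfolding real_open_def
proof (intro conjI ballI subset_refl)
  fix \<sigma>
  have "real_carrier S \<inter> real_face S \<sigma> = topspace (subtopology (powertop_real UNIV) (real_face S \<sigma>))"
    by (auto simp: real_face_def)
  then show "openin (subtopology (powertop_real UNIV) (real_face S \<sigma>)) (real_carrier S \<inter> real_face S \<sigma>)"
    by (metis openin_topspace)
qed

lemma topspace_realisation: "topspace (realisation S) = real_carrier S"
proof -
  have "\<And>U. real_open S U \<Longrightarrow> U \<subseteq> real_carrier S" by (simp add: real_open_def)
  then show ?thesis unfolding topspace_def openin_realisation
    using real_open_carrier by blast
qed

lemma real_face_subset_carrier: "real_face S \<sigma> \<subseteq> real_carrier S"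
  unfolding real_face_def by blast

lemma real_carrier_support:
  assumes "p \<in> real_carrier S"
  shows "{v. p v \<noteq> 0} \<in> S" "p \<in> real_face S {v. p v \<noteq> 0}"
  using assms unfolding real_carrier_def real_face_def by blast+

lemma real_face_eq:
  fixes S :: "'v set set"
  assumes S: "simplicial_complex S" and t: "\<tau> \<in> S"
  shows "real_face S \<tau> = {q. (\<forall>v. 0 \<le> q v) \<and> (\<forall>v. v \<notin> \<tau> \<longrightarrow> q v = 0) \<and> sum q \<tau> = 1}"
proof -
  have fin: "finite \<tau>" using S t by (rule simplicial_complex_finite)
  show ?thesis
  proof (intro set_eqI iffI)
    fix q assume q: "q \<in> real_face S \<tau>"
    then have s: "{v. q v \<noteq> 0} \<subseteq> \<tau>" and c: "q \<in> real_carrier S" unfolding real_face_def by blast+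
    have e: "sum q \<tau> = sum q {v. q v \<noteq> 0}"
      by (rule sum.mono_neutral_right[OF fin s]) blast
    have "\<forall>v. 0 \<le> q v" "sum q {v. q v \<noteq> 0} = 1" using c unfolding real_carrier_def by blast+
    moreover have "\<forall>v. v \<notin> \<tau> \<longrightarrow> q v = 0" using s by blast
    ultimately show "q \<in> {q. (\<forall>v. 0 \<le> q v) \<and> (\<forall>v. v \<notin> \<tau> \<longrightarrow> q v = 0) \<and> sum q \<tau> = 1}"
      using e by simp
  next
    fix q :: "'v \<Rightarrow> real" assume q: "q \<in> {q. (\<forall>v. 0 \<le> q v) \<and> (\<forall>v. v \<notin> \<tau> \<longrightarrow> q v = 0) \<and> sum q \<tau> = 1}"
    then have q1: "\<forall>v. 0 \<le> q v" and q2: "\<forall>v. v \<notin> \<tau> \<longrightarrow> q v = 0" and q3: "sum q \<tau> = 1" by simp_all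
    have s: "{v. q v \<noteq> 0} \<subseteq> \<tau>" using q2 by blast
    have e: "sum q \<tau> = sum q {v. q v \<noteq> 0}"
      by (rule sum.mono_neutral_right[OF fin s]) blast
    have ne: "{v. q v \<noteq> 0} \<noteq> {}"
    proof
      assume "{v. q v \<noteq> 0} = {}"
      then have "sum q \<tau> = 0" using e by simp
      then show False using q3 by simp
    qed
    have "{v. q v \<noteq> 0} \<in> S" using simplicial_complex_subset[OF S t s ne] .
    then have "q \<in> real_carrier S" using q1 q3 e unfolding real_carrier_def by simp
    then show "q \<in> real_face S \<tau>" using s unfolding real_face_def by blast
  qed
qed

lemma closedin_real_face:
  fixes S :: "'v set set"
  assumes S: "simplicial_complex S" and t: "\<tau> \<in> S"
  shows "closedin (powertop_real UNIV) (real_face S \<tau>)"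
proof -
  have fin: "finite \<tau>" using S t by (rule simplicial_complex_finite)
  let ?P = "powertop_real (UNIV::'v set)"
  have c1: "closedin ?P {q. 0 \<le> q v}" for v :: 'v
    using closedin_continuous_map_preimage[OF continuous_map_product_projection[of v UNIV "\<lambda>_. euclideanreal"], of "{0..}"]
    by simp
  have c2: "closedin ?P {q. q v = 0 \<or> v \<in> \<tau>}" for v :: 'v
  proof (cases "v \<in> \<tau>")
    case True then show ?thesis using closedin_topspace[of ?P] by simp
  next
    case False then show ?thesis
    using closedin_continuous_map_preimage[OF continuous_map_product_projection[of v UNIV "\<lambda>_. euclideanreal"], of "{0}"]
    by simp
  qed
  have cs: "continuous_map ?P euclideanreal (\<lambda>q. sum q \<tau>)"
    by (intro continuous_map_sum fin continuous_map_product_projection) auto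
  have c3: "closedin ?P {q. sum q \<tau> = 1}"
    using closedin_continuous_map_preimage[OF cs, of "{1}"] by simp
  have e: "real_face S \<tau> = (\<Inter>v. {q. 0 \<le> q v}) \<inter> (\<Inter>v. {q. q v = 0 \<or> v \<in> \<tau>}) \<inter> {q. sum q \<tau> = 1}"
    unfolding real_face_eq[OF S t] by auto
  have "closedin ?P (\<Inter>v. {q. 0 \<le> q v})"
    by (rule closedin_Inter) (use c1 in auto)
  moreover have "closedin ?P (\<Inter>v. {q. q v = 0 \<or> v \<in> \<tau>})"
    by (rule closedin_Inter) (use c2 in auto)
  ultimately show ?thesis unfolding e using c3 by (intro closedin_Int)
qed

lemma openin_real_face_finite:
  fixes S :: "'v set set"
  assumes S: "simplicial_complex S" and F: "finite F" and U: "real_open S U"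
  shows "openin (subtopology (powertop_real UNIV) (real_face S F)) (U \<inter> real_face S F)"
proof -
  let ?P = "powertop_real (UNIV::'v set)"
  let ?T = "{\<tau>. \<tau> \<in> S \<and> \<tau> \<subseteq> F}"
  have "finite ?T" by (rule finite_subset[of _ "Pow F"]) (use F in auto)
  have faces: "real_face S F = (\<Union>\<tau>\<in>?T. real_face S \<tau>)"
  proof (intro set_eqI iffI)
    fix q assume "q \<in> real_face S F"
    then have "{v. q v \<noteq> 0} \<in> ?T" "q \<in> real_face S {v. q v \<noteq> 0}"
      unfolding real_face_def real_carrier_def by blast+
    then show "q \<in> (\<Union>\<tau>\<in>?T. real_face S \<tau>)" by blast
  qed (auto simp: real_face_def)
  have "closedin ?P (real_face S \<tau> - U)" if "\<tau> \<in> ?T" for \<tau>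
  proof -
    have "openin (subtopology ?P (real_face S \<tau>)) (U \<inter> real_face S \<tau>)"
      using U that by (simp add: real_open_def)
    then have "closedin (subtopology ?P (real_face S \<tau>)) (real_face S \<tau> - U)"
      unfolding closedin_def by (simp add: Diff_Diff_Int Int_commute)
    then show ?thesis using closedin_trans_full closedin_real_face[OF S] that by blast
  qed
  then have "closedin ?P (\<Union>\<tau>\<in>?T. real_face S \<tau> - U)"
    using \<open>finite ?T\<close> by (intro closedin_Union) auto
  then have "openin ?P (UNIV - (\<Union>\<tau>\<in>?T. real_face S \<tau> - U))"
    using openin_diff[OF openin_topspace] by fastforce
  moreover have "U \<inter> real_face S F = (UNIV - (\<Union>\<tau>\<in>?T. real_face S \<tau> - U)) \<inter> real_face S F"
    unfolding faces by blast
  ultimately show ?thesis unfolding openin_subtopology by blast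
qed

text \<open>The product of the weak topology with the compact interval is again coherent with the
  closed simplices; this is the tube lemma, and it is where compactness of \<open>[0,1]\<close> enters.\<close>
lemma real_open_compact_slices:
  fixes S :: "'v set set" and W :: "(real \<times> ('v \<Rightarrow> real)) set"
  assumes N: "compactin (top_of_set {0..1}) N"
    and W: "\<And>\<sigma>. \<sigma> \<in> S \<Longrightarrow> openin (prod_topology (top_of_set {0..1})
              (subtopology (powertop_real UNIV) (real_face S \<sigma>))) (W \<inter> {0..1} \<times> real_face S \<sigma>)"
  shows "real_open S {p \<in> real_carrier S. N \<times> {p} \<subseteq> W}"
  unfolding real_open_def
proof (intro conjI ballI)
  let ?V = "{p \<in> real_carrier S. N \<times> {p} \<subseteq> W}"
  fix \<sigma> assume \<sigma>: "\<sigma> \<in> S"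
  let ?F = "subtopology (powertop_real UNIV) (real_face S \<sigma>)"
  show "openin ?F (?V \<inter> real_face S \<sigma>)"
  proof (subst openin_subopen, intro ballI)
    fix p assume p: "p \<in> ?V \<inter> real_face S \<sigma>"
    have "N \<subseteq> {0..1}" using compactin_subset_topspace[OF N] by simp
    then have tube: "N \<times> {p} \<subseteq> W \<inter> {0..1} \<times> real_face S \<sigma>" using p by blast
    have "compactin ?F {p}" using p by simp
    then obtain U' V' where "openin (top_of_set {0..1}) U'" and V': "openin ?F V'" "N \<subseteq> U'" "{p} \<subseteq> V'"
      and UV': "U' \<times> V' \<subseteq> W \<inter> {0..1} \<times> real_face S \<sigma>"
      by (rule Wallace_theorem_prod_topology[OF N _ W[OF \<sigma>] tube])
    have "V' \<subseteq> real_face S \<sigma>" using openin_subset[OF V'(1)] by simp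
    then have "V' \<subseteq> ?V \<inter> real_face S \<sigma>"
      using UV' V'(2) real_face_subset_carrier by blast
    then show "\<exists>T. openin ?F T \<and> p \<in> T \<and> T \<subseteq> ?V \<inter> real_face S \<sigma>"
      using V' by blast
  qed
qed blast

lemma openin_prod_realisation:
  fixes S :: "'v set set" and W :: "(real \<times> ('v \<Rightarrow> real)) set"
  assumes sub: "W \<subseteq> {0..1} \<times> real_carrier S"
    and W: "\<And>\<sigma>. \<sigma> \<in> S \<Longrightarrow> openin (prod_topology (top_of_set {0..1})
              (subtopology (powertop_real UNIV) (real_face S \<sigma>))) (W \<inter> {0..1} \<times> real_face S \<sigma>)"
  shows "openin (prod_topology (top_of_set {0..1}) (realisation S)) W"
proof (subst openin_subopen, intro ballI)
  let ?I = "top_of_set {0..1::real}"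
  fix z assume "z \<in> W"
  then obtain t0 p0 where z: "z = (t0, p0)" "t0 \<in> {0..1}" "p0 \<in> real_carrier S" "(t0, p0) \<in> W"
    using sub by blast
  define \<sigma> where "\<sigma> = {v. p0 v \<noteq> 0}"
  have \<sigma>: "\<sigma> \<in> S" "p0 \<in> real_face S \<sigma>" using real_carrier_support[OF z(3)] unfolding \<sigma>_def by blast+
  obtain U1 V1 where U1: "openin ?I U1" "t0 \<in> U1" and p0: "p0 \<in> V1"
    and UV1: "U1 \<times> V1 \<subseteq> W \<inter> {0..1} \<times> real_face S \<sigma>"
    using W[OF \<sigma>(1), unfolded openin_prod_topology_alt] z \<sigma>(2) by blast
  obtain e where e: "e > 0" and eU1: "\<forall>t\<in>{0..1}. dist t t0 < e \<longrightarrow> t \<in> U1"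
    using U1 unfolding openin_euclidean_subtopology_iff by blast
  define N where "N = {0..1::real} \<inter> cball t0 (e/2)"
  define N0 where "N0 = {0..1::real} \<inter> ball t0 (e/2)"
  define V where "V = {p \<in> real_carrier S. N \<times> {p} \<subseteq> W}"
  have "compact N" unfolding N_def by (intro compact_Int_closed) auto
  then have "compactin ?I N"
    unfolding compactin_subtopology compactin_euclidean_iff N_def by blast
  then have "real_open S V"
    unfolding V_def using W by (rule real_open_compact_slices)
  then have "openin (prod_topology ?I (realisation S)) (N0 \<times> V)"
    unfolding N0_def by (simp add: openin_prod_Times_iff openin_realisation openin_open_Int)
  moreover have "z \<in> N0 \<times> V"
  proof -
    have "N \<subseteq> U1" using eU1 e unfolding N_def by (auto simp: dist_commute)
    then have "N \<times> {p0} \<subseteq> W" using UV1 p0 by blast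
    then show ?thesis using z e unfolding N0_def V_def by auto
  qed
  moreover have "N0 \<times> V \<subseteq> W"
    unfolding N0_def N_def V_def by auto
  ultimately show "\<exists>T. openin (prod_topology ?I (realisation S)) T \<and> z \<in> T \<and> T \<subseteq> W"
    by blast
qed

lemma continuous_map_prod_realisationI:
  fixes S :: "'v set set" and H :: "real \<times> ('v \<Rightarrow> real) \<Rightarrow> ('v \<Rightarrow> real)"
  assumes S: "simplicial_complex S"
    and carrier: "\<And>t p. t \<in> {0..1} \<Longrightarrow> p \<in> real_carrier S \<Longrightarrow> H (t,p) \<in> real_carrier S"
    and faces: "\<And>\<sigma>. \<sigma> \<in> S \<Longrightarrow> \<exists>F. finite F
          \<and> (\<forall>t\<in>{0..1}. \<forall>p\<in>real_face S \<sigma>. {v. H (t,p) v \<noteq> 0} \<subseteq> F)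
          \<and> continuous_map (prod_topology (top_of_set {0..1})
               (subtopology (powertop_real UNIV) (real_face S \<sigma>))) (powertop_real UNIV) H"
  shows "continuous_map (prod_topology (top_of_set {0..1}) (realisation S)) (realisation S) H"
  unfolding continuous_map_def
proof (intro conjI allI impI)
  let ?X = "prod_topology (top_of_set {0..1::real}) (realisation S)"
  show "H \<in> topspace ?X \<rightarrow> topspace (realisation S)"
    using carrier by (auto simp: topspace_realisation)
  fix U assume "openin (realisation S) U"
  then have U: "real_open S U" by (simp add: openin_realisation)
  show "openin ?X {z \<in> topspace ?X. H z \<in> U}"
  proof (rule openin_prod_realisation)
    show "{z \<in> topspace ?X. H z \<in> U} \<subseteq> {0..1} \<times> real_carrier S"
      by (auto simp: topspace_realisation)
  next
    fix \<sigma> assume "\<sigma> \<in> S"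
    let ?Z = "prod_topology (top_of_set {0..1}) (subtopology (powertop_real UNIV) (real_face S \<sigma>))"
    obtain F where F: "finite F" and supp: "\<forall>t\<in>{0..1}. \<forall>p\<in>real_face S \<sigma>. {v. H (t,p) v \<noteq> 0} \<subseteq> F"
      and H: "continuous_map ?Z (powertop_real UNIV) H"
      using faces[OF \<open>\<sigma> \<in> S\<close>] by blast
    obtain G where G: "openin (powertop_real UNIV) G" and UG: "U \<inter> real_face S F = G \<inter> real_face S F"
      using openin_real_face_finite[OF S F U] unfolding openin_subtopology by blast
    have "H z \<in> real_face S F" if "z \<in> topspace ?Z" for z
      using that carrier supp real_face_subset_carrier unfolding real_face_def by fastforce
    then have "{z \<in> topspace ?X. H z \<in> U} \<inter> {0..1} \<times> real_face S \<sigma> = {z \<in> topspace ?Z. H z \<in> G}"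
      using UG real_face_subset_carrier by (fastforce simp: topspace_realisation)
    then show "openin ?Z ({z \<in> topspace ?X. H z \<in> U} \<inter> {0..1} \<times> real_face S \<sigma>)"
      using openin_continuous_map_preimage[OF H G] by simp
  qed
qed

section \<open>Prism homotopies between contiguous vertex maps\<close>

definition realise_map :: "('v \<Rightarrow> 'v) \<Rightarrow> ('v \<Rightarrow> real) \<Rightarrow> 'v \<Rightarrow> real" where
  "realise_map f p w = sum p {x. p x \<noteq> 0 \<and> f x = w}"

text \<open>For \<open>a \<le> b\<close>, \<open>lower_part u a b\<close> is the length of \<open>[a, b] \<inter> (-\<infinity>, u]\<close>
  and \<open>upper_part u a b\<close> the length of the rest of \<open>[a, b]\<close>.\<close>
definition lower_part :: "real \<Rightarrow> real \<Rightarrow> real \<Rightarrow> real" where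
  "lower_part u a b = max 0 (min b u - a)"
definition upper_part :: "real \<Rightarrow> real \<Rightarrow> real \<Rightarrow> real" where
  "upper_part u a b = (b - a) - lower_part u a b"

definition weight_upto :: "('v \<times> 'v) set \<Rightarrow> ('v \<Rightarrow> real) \<Rightarrow> 'v set \<Rightarrow> 'v \<Rightarrow> real" where
  "weight_upto r p A x = sum p {y \<in> A. (y,x) \<in> r \<or> y = x}"
definition weight_below :: "('v \<times> 'v) set \<Rightarrow> ('v \<Rightarrow> real) \<Rightarrow> 'v set \<Rightarrow> 'v \<Rightarrow> real" where
  "weight_below r p A x = sum p {y \<in> A. (y,x) \<in> r \<and> y \<noteq> x}"

text \<open>List the support of \<open>p\<close> in the order \<open>r\<close>, so that vertex \<open>x\<close> owns the interval
  \<open>[weight_below x, weight_upto x]\<close> of \<open>[0, 1]\<close>. At time \<open>t\<close> the part of that interval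
  below \<open>1 - t\<close> is carried to \<open>f x\<close> and the rest to \<open>g x\<close>.\<close>
definition prism_on :: "('v \<times> 'v) set \<Rightarrow> ('v \<Rightarrow> 'v) \<Rightarrow> ('v \<Rightarrow> 'v) \<Rightarrow> 'v set \<Rightarrow>
    real \<Rightarrow> ('v \<Rightarrow> real) \<Rightarrow> 'v \<Rightarrow> real" where
  "prism_on r f g A t p v =
     (\<Sum>x\<in>{x\<in>A. f x = v}. lower_part (1-t) (weight_below r p A x) (weight_upto r p A x))
   + (\<Sum>x\<in>{x\<in>A. g x = v}. upper_part (1-t) (weight_below r p A x) (weight_upto r p A x))"

definition prism :: "('v \<times> 'v) set \<Rightarrow> ('v \<Rightarrow> 'v) \<Rightarrow> ('v \<Rightarrow> 'v) \<Rightarrow>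
    real \<times> ('v \<Rightarrow> real) \<Rightarrow> 'v \<Rightarrow> real" where
  "prism r f g = (\<lambda>(t,p). prism_on r f g {v. p v \<noteq> 0} t p)"

lemma lower_part_nonneg: "0 \<le> lower_part u a b" by (simp add: lower_part_def)
lemma upper_part_nonneg: "a \<le> b \<Longrightarrow> 0 \<le> upper_part u a b" by (simp add: upper_part_def lower_part_def)
lemma lower_upper_part: "lower_part u a b + upper_part u a b = b - a" by (simp add: upper_part_def)
lemma lower_part_same: "lower_part u a a = 0" by (simp add: lower_part_def)
lemma upper_part_same: "upper_part u a a = 0" by (simp add: upper_part_def lower_part_def)
lemma lower_part_pos: "lower_part u a b \<noteq> 0 \<Longrightarrow> a < u" by (simp add: lower_part_def)
lemma upper_part_pos: "a \<le> b \<Longrightarrow> upper_part u a b \<noteq> 0 \<Longrightarrow> u < b" by (auto simp: upper_part_def lower_part_def)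
lemma lower_part_1: "a \<le> b \<Longrightarrow> b \<le> 1 \<Longrightarrow> lower_part 1 a b = b - a" by (simp add: lower_part_def)
lemma upper_part_1: "a \<le> b \<Longrightarrow> b \<le> 1 \<Longrightarrow> upper_part 1 a b = 0" by (simp add: upper_part_def lower_part_def)
lemma lower_part_0: "0 \<le> a \<Longrightarrow> 0 \<le> b \<Longrightarrow> lower_part 0 a b = 0" by (simp add: lower_part_def)
lemma upper_part_0: "0 \<le> a \<Longrightarrow> 0 \<le> b \<Longrightarrow> upper_part 0 a b = b - a" by (simp add: upper_part_def lower_part_def)

lemma weight_upto_eq:
  assumes "finite A"
  shows "weight_upto r p A x = weight_below r p A x + (if x \<in> A then p x else 0)"
proof (cases "x \<in> A")
  case True
  have "{y \<in> A. (y,x) \<in> r \<or> y = x} = insert x {y \<in> A. (y,x) \<in> r \<and> y \<noteq> x}" using True by blast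
  then show ?thesis using assms True unfolding weight_upto_def weight_below_def by simp
next
  case False
  have "{y \<in> A. (y,x) \<in> r \<or> y = x} = {y \<in> A. (y,x) \<in> r \<and> y \<noteq> x}" using False by blast
  then show ?thesis using False unfolding weight_upto_def weight_below_def by simp
qed

lemma weight_bounds:
  assumes "finite A" "\<forall>v. 0 \<le> p v"
  shows "0 \<le> weight_below r p A x" "weight_below r p A x \<le> weight_upto r p A x" "weight_upto r p A x \<le> sum p A"
proof -
  show "0 \<le> weight_below r p A x" unfolding weight_below_def using assms by (simp add: sum_nonneg)
  show "weight_below r p A x \<le> weight_upto r p A x" unfolding weight_below_def weight_upto_def
    using assms by (intro sum_mono2) auto
  show "weight_upto r p A x \<le> sum p A" unfolding weight_upto_def
    using assms by (intro sum_mono2) auto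
qed

lemma weight_superset:
  assumes "finite B" "A \<subseteq> B" "\<forall>v\<in>B-A. p v = 0"
  shows "weight_upto r p A x = weight_upto r p B x" "weight_below r p A x = weight_below r p B x"
  unfolding weight_upto_def weight_below_def
  by (rule sum.mono_neutral_left; use assms in auto)+

lemma prism_on_superset:
  fixes p :: "'v \<Rightarrow> real"
  assumes "finite B" "{v. p v \<noteq> 0} \<subseteq> B"
  shows "prism_on r f g {v. p v \<noteq> 0} t p = prism_on r f g B t p"
proof
  fix v :: 'v
  let ?A = "{v. p v \<noteq> 0}"
  have weights: "weight_upto r p ?A x = weight_upto r p B x" "weight_below r p ?A x = weight_below r p B x" for x
    using weight_superset[OF assms] by auto
  have empty_interval: "weight_upto r p B x = weight_below r p B x" if "x \<in> B - ?A" for x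
    using weight_upto_eq[OF \<open>finite B\<close>, of r p x] that by simp
  have "(\<Sum>x\<in>{x\<in>?A. h x = v}. c (weight_below r p B x) (weight_upto r p B x))
      = (\<Sum>x\<in>{x\<in>B. h x = v}. c (weight_below r p B x) (weight_upto r p B x))"
    if "\<And>a. c a a = 0" for h :: "'v \<Rightarrow> 'v" and c :: "real \<Rightarrow> real \<Rightarrow> real"
    by (rule sum.mono_neutral_left) (use assms empty_interval that in auto)
  then show "prism_on r f g ?A t p v = prism_on r f g B t p v"
    unfolding prism_on_def weights by (simp add: lower_part_same upper_part_same)
qed

locale carrier_point =
  fixes S :: "'v set set" and p :: "'v \<Rightarrow> real"
  assumes complex: "simplicial_complex S" and carrier: "p \<in> real_carrier S"
begin

definition support :: "'v set" where "support = {v. p v \<noteq> 0}"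

lemma support_simplex: "support \<in> S" and finite_support: "finite support"
  and p_nonneg: "\<forall>v. 0 \<le> p v" and sum_support: "sum p support = 1"
  using carrier complex unfolding support_def real_carrier_def simplicial_complex_def by blast+

lemma weights_le:
  "weight_below r p support x \<le> weight_upto r p support x"
  "0 \<le> weight_below r p support x" "weight_upto r p support x \<le> 1"
  using weight_bounds[OF finite_support p_nonneg, of r x] sum_support by auto

definition lower_mass :: "('v \<times> 'v) set \<Rightarrow> real \<Rightarrow> 'v \<Rightarrow> real" where
  "lower_mass r t x = lower_part (1 - t) (weight_below r p support x) (weight_upto r p support x)"

definition upper_mass :: "('v \<times> 'v) set \<Rightarrow> real \<Rightarrow> 'v \<Rightarrow> real" where
  "upper_mass r t x = upper_part (1 - t) (weight_below r p support x) (weight_upto r p support x)"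

lemma prism_eq: "prism r f g (t,p) v =
    (\<Sum>x\<in>{x\<in>support. f x = v}. lower_mass r t x) + (\<Sum>x\<in>{x\<in>support. g x = v}. upper_mass r t x)"
  unfolding prism_def prism_on_def support_def lower_mass_def upper_mass_def by simp

lemma prism_nonneg: "0 \<le> prism r f g (t,p) v"
  unfolding prism_eq lower_mass_def upper_mass_def
  by (intro add_nonneg_nonneg sum_nonneg) (auto simp: lower_part_nonneg upper_part_nonneg weights_le)

lemma prism_support:
  "{v. prism r f g (t,p) v \<noteq> 0} \<subseteq>
     f ` {x\<in>support. lower_mass r t x \<noteq> 0} \<union> g ` {x\<in>support. upper_mass r t x \<noteq> 0}"
proof
  fix v assume v: "v \<in> {v. prism r f g (t,p) v \<noteq> 0}"
  show "v \<in> f ` {x\<in>support. lower_mass r t x \<noteq> 0} \<union> g ` {x\<in>support. upper_mass r t x \<noteq> 0}"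
  proof (rule ccontr)
    assume n: "v \<notin> f ` {x\<in>support. lower_mass r t x \<noteq> 0} \<union> g ` {x\<in>support. upper_mass r t x \<noteq> 0}"
    have "(\<Sum>x\<in>{x\<in>support. f x = v}. lower_mass r t x) = 0"
      by (rule sum.neutral) (use n in blast)
    moreover have "(\<Sum>x\<in>{x\<in>support. g x = v}. upper_mass r t x) = 0"
      by (rule sum.neutral) (use n in blast)
    ultimately have "prism r f g (t,p) v = 0" unfolding prism_eq by simp
    then show False using v by simp
  qed
qed

lemma prism_sum: "sum (prism r f g (t,p)) (f ` support \<union> g ` support) = 1"
proof -
  let ?T = "f ` support \<union> g ` support"
  have fT: "finite ?T" using finite_support by simp
  have "sum (prism r f g (t,p)) ?T =
      (\<Sum>v\<in>?T. \<Sum>x\<in>{x\<in>support. f x = v}. lower_mass r t x)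
    + (\<Sum>v\<in>?T. \<Sum>x\<in>{x\<in>support. g x = v}. upper_mass r t x)"
    unfolding prism_eq by (simp add: sum.distrib)
  also have "\<dots> = (\<Sum>x\<in>support. lower_mass r t x) + (\<Sum>x\<in>support. upper_mass r t x)"
  proof -
    have gf: "f ` support \<subseteq> ?T" and gg: "g ` support \<subseteq> ?T" by blast+
    show ?thesis unfolding sum.group[OF finite_support fT gf] sum.group[OF finite_support fT gg] ..
  qed
  also have "\<dots> = (\<Sum>x\<in>support. weight_upto r p support x - weight_below r p support x)"
    by (simp add: sum.distrib[symmetric] lower_upper_part lower_mass_def upper_mass_def)
  also have "\<dots> = (\<Sum>x\<in>support. p x)"
    by (rule sum.cong) (auto simp: weight_upto_eq[OF finite_support])
  finally show ?thesis using sum_support by simp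
qed

lemma prism_support_subset: "{v. prism r f g (t,p) v \<noteq> 0} \<subseteq> f ` support \<union> g ` support"
  using prism_support by blast

lemma prism_sum_support: "sum (prism r f g (t,p)) {v. prism r f g (t,p) v \<noteq> 0} = 1"
proof -
  have "sum (prism r f g (t,p)) {v. prism r f g (t,p) v \<noteq> 0} = sum (prism r f g (t,p)) (f ` support \<union> g ` support)"
    by (rule sum.mono_neutral_left) (use finite_support prism_support_subset in auto)
  then show ?thesis using prism_sum by simp
qed

lemma prism_support_ordered:
  assumes tr: "trans r" and tot: "\<forall>x\<in>support. \<forall>y\<in>support. x \<noteq> y \<longrightarrow> (x,y) \<in> r \<or> (y,x) \<in> r"
    and x: "x \<in> support" "lower_mass r t x \<noteq> 0"
    and y: "y \<in> support" "upper_mass r t y \<noteq> 0"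
  shows "x = y \<or> (x,y) \<in> r"
proof (rule ccontr)
  assume n: "\<not> (x = y \<or> (x,y) \<in> r)"
  then have yx: "(y,x) \<in> r" "x \<noteq> y" using tot x y by blast+
  have "{z\<in>support. (z,y) \<in> r \<or> z = y} \<subseteq> {z\<in>support. (z,x) \<in> r \<and> z \<noteq> x}"
  proof
    fix z assume z: "z \<in> {z\<in>support. (z,y) \<in> r \<or> z = y}"
    then have "(z,x) \<in> r" using yx tr unfolding trans_def by blast
    moreover have "z \<noteq> x" using z n by blast
    ultimately show "z \<in> {z\<in>support. (z,x) \<in> r \<and> z \<noteq> x}" using z by blast
  qed
  then have "weight_upto r p support y \<le> weight_below r p support x" unfolding weight_upto_def weight_below_def
    using finite_support p_nonneg by (intro sum_mono2) auto
  moreover have "weight_below r p support x < 1 - t"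
    using lower_part_pos x(2) unfolding lower_mass_def by blast
  moreover have "1 - t < weight_upto r p support y"
    using upper_part_pos[OF weights_le(1)] y(2) unfolding upper_mass_def by blast
  ultimately show False by simp
qed

lemma prism_in_carrier:
  assumes "trans r" and total: "\<forall>x\<in>support. \<forall>y\<in>support. x \<noteq> y \<longrightarrow> (x,y) \<in> r \<or> (y,x) \<in> r"
    and contiguous: "\<And>P Q. P \<subseteq> support \<Longrightarrow> Q \<subseteq> support \<Longrightarrow> (\<forall>x\<in>P. \<forall>y\<in>Q. x = y \<or> (x,y) \<in> r) \<Longrightarrow>
                P \<union> Q \<noteq> {} \<Longrightarrow> f ` P \<union> g ` Q \<in> S"
  shows "prism r f g (t,p) \<in> real_carrier S"
proof -
  let ?P = "{x\<in>support. lower_mass r t x \<noteq> 0}"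
  let ?Q = "{x\<in>support. upper_mass r t x \<noteq> 0}"
  have ne: "{v. prism r f g (t,p) v \<noteq> 0} \<noteq> {}"
    using prism_sum_support[of r f g t] by (metis sum.empty zero_neq_one)
  then have "?P \<union> ?Q \<noteq> {}" using prism_support[of r f g t] by blast
  moreover have "\<forall>x\<in>?P. \<forall>y\<in>?Q. x = y \<or> (x,y) \<in> r"
    using prism_support_ordered[OF \<open>trans r\<close> total] by blast
  ultimately have "f ` ?P \<union> g ` ?Q \<in> S" by (intro contiguous) auto
  then have "{v. prism r f g (t,p) v \<noteq> 0} \<in> S"
    using simplicial_complex_subset[OF complex _ prism_support ne] by blast
  then show ?thesis unfolding real_carrier_def using prism_nonneg prism_sum_support by blast
qed

lemma prism_0: "prism r f g (0,p) = realise_map f p"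
proof
  fix v
  have "lower_part 1 (weight_below r p support x) (weight_upto r p support x) = p x" if "x \<in> support" for x
    using lower_part_1[OF weights_le(1)[of r x] weights_le(3)[of r x]] weight_upto_eq[OF finite_support, of r p x] that by simp
  moreover have "upper_part 1 (weight_below r p support x) (weight_upto r p support x) = 0" for x
    using upper_part_1[OF weights_le(1,3)] by simp
  ultimately show "prism r f g (0,p) v = realise_map f p v"
    unfolding prism_eq realise_map_def support_def lower_mass_def upper_mass_def by simp
qed

lemma prism_1: "prism r f g (1,p) = realise_map g p"
proof
  fix v
  have nonneg: "0 \<le> weight_upto r p support x" for x
    using weights_le(1,2)[of r x] by linarith
  have "upper_part 0 (weight_below r p support x) (weight_upto r p support x) = p x" if "x \<in> support" for x
    using upper_part_0[OF weights_le(2)[of r x] nonneg[of x]] weight_upto_eq[OF finite_support, of r p x] that by simp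
  moreover have "lower_part 0 (weight_below r p support x) (weight_upto r p support x) = 0" for x
    using lower_part_0[OF weights_le(2) nonneg] .
  ultimately show "prism r f g (1,p) v = realise_map g p v"
    unfolding prism_eq realise_map_def support_def lower_mass_def upper_mass_def by simp
qed

end

lemma continuous_map_prism:
  fixes S :: "'v set set"
  assumes S: "simplicial_complex S" and \<sigma>: "\<sigma> \<in> S"
  shows "continuous_map (prod_topology (top_of_set {0..1}) (subtopology (powertop_real UNIV) (real_face S \<sigma>)))
           (powertop_real UNIV) (prism r f g)"
proof -
  let ?Z = "prod_topology (top_of_set {0..1::real}) (subtopology (powertop_real (UNIV::'v set)) (real_face S \<sigma>))"
  have fin: "finite \<sigma>" using S \<sigma> by (rule simplicial_complex_finite)
  have fst_cont: "continuous_map ?Z euclideanreal fst"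
    using continuous_map_fst[of "top_of_set {0..1::real}" "subtopology (powertop_real (UNIV::'v set)) (real_face S \<sigma>)"]
    unfolding continuous_map_in_subtopology by blast
  have snd_cont: "continuous_map ?Z (powertop_real UNIV) snd"
    using continuous_map_snd[of "top_of_set {0..1::real}" "subtopology (powertop_real (UNIV::'v set)) (real_face S \<sigma>)"]
    unfolding continuous_map_in_subtopology by blast
  have coord_cont: "continuous_map ?Z euclideanreal (\<lambda>z. snd z y)" for y
    using continuous_map_compose[OF snd_cont continuous_map_product_projection[of y UNIV "\<lambda>_. euclideanreal"]]
    by (simp add: o_def)
  have upto_cont: "continuous_map ?Z euclideanreal (\<lambda>z. weight_upto r (snd z) \<sigma> x)" for x
    unfolding weight_upto_def using fin by (intro continuous_map_sum coord_cont) auto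
  have below_cont: "continuous_map ?Z euclideanreal (\<lambda>z. weight_below r (snd z) \<sigma> x)" for x
    unfolding weight_below_def using fin by (intro continuous_map_sum coord_cont) auto
  have lower_cont: "continuous_map ?Z euclideanreal (\<lambda>z. lower_part (1 - fst z) (weight_below r (snd z) \<sigma> x) (weight_upto r (snd z) \<sigma> x))" for x
  proof -
    have one_cont: "continuous_map ?Z euclideanreal (\<lambda>z. 1::real)" by simp
    have zero_cont: "continuous_map ?Z euclideanreal (\<lambda>z. 0::real)" by simp
    show ?thesis unfolding lower_part_def by (intro continuous_map_real_max continuous_map_real_min continuous_map_diff
        zero_cont one_cont fst_cont upto_cont below_cont)
  qed
  have upper_cont: "continuous_map ?Z euclideanreal (\<lambda>z. upper_part (1 - fst z) (weight_below r (snd z) \<sigma> x) (weight_upto r (snd z) \<sigma> x))" for x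
    unfolding upper_part_def by (intro continuous_map_diff lower_cont upto_cont below_cont)
  have prism_on_cont: "continuous_map ?Z (powertop_real UNIV) (\<lambda>z. prism_on r f g \<sigma> (fst z) (snd z))"
    unfolding continuous_map_componentwise_UNIV prism_on_def
    using fin by (intro allI continuous_map_add continuous_map_sum lower_cont upper_cont) auto
  show ?thesis
  proof (rule continuous_map_eq[OF prism_on_cont])
    fix z assume "z \<in> topspace ?Z"
    then obtain t p where z: "z = (t,p)" and "p \<in> real_face S \<sigma>" by auto
    then have sub: "{v. p v \<noteq> 0} \<subseteq> \<sigma>" unfolding real_face_def by blast
    have "prism_on r f g {v. p v \<noteq> 0} t p = prism_on r f g \<sigma> t p"
      by (rule prism_on_superset[OF fin sub])
    then show "prism_on r f g \<sigma> (fst z) (snd z) = prism r f g z" unfolding z prism_def by simp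
  qed
qed

lemma homotopic_realise_maps:
  fixes S :: "'v set set"
  assumes S: "simplicial_complex S" and "trans r"
    and total: "\<And>\<sigma> x y. \<sigma> \<in> S \<Longrightarrow> x \<in> \<sigma> \<Longrightarrow> y \<in> \<sigma> \<Longrightarrow> x \<noteq> y \<Longrightarrow> (x,y) \<in> r \<or> (y,x) \<in> r"
    and contiguous: "\<And>\<sigma> P Q. \<sigma> \<in> S \<Longrightarrow> P \<subseteq> \<sigma> \<Longrightarrow> Q \<subseteq> \<sigma> \<Longrightarrow> (\<forall>x\<in>P. \<forall>y\<in>Q. x = y \<or> (x,y) \<in> r) \<Longrightarrow>
                P \<union> Q \<noteq> {} \<Longrightarrow> f ` P \<union> g ` Q \<in> S"
  shows "homotopic_with (\<lambda>_. True) (realisation S) (realisation S) (realise_map f) (realise_map g)"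
proof -
  have "continuous_map (prod_topology (top_of_set {0..1}) (realisation S)) (realisation S) (prism r f g)"
  proof (rule continuous_map_prod_realisationI[OF S])
    fix t :: real and p assume "p \<in> real_carrier S"
    then interpret carrier_point S p using S by unfold_locales
    show "prism r f g (t,p) \<in> real_carrier S"
    proof (rule prism_in_carrier[OF \<open>trans r\<close>])
      show "\<forall>x\<in>support. \<forall>y\<in>support. x \<noteq> y \<longrightarrow> (x,y) \<in> r \<or> (y,x) \<in> r"
        using total[OF support_simplex] by blast
    qed (rule contiguous[OF support_simplex])
  next
    fix \<sigma> assume \<sigma>: "\<sigma> \<in> S"
    have "{v. prism r f g (t,p) v \<noteq> 0} \<subseteq> f ` \<sigma> \<union> g ` \<sigma>" if "p \<in> real_face S \<sigma>" for t p
    proof -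
      from that have p: "p \<in> real_carrier S" and sub: "{v. p v \<noteq> 0} \<subseteq> \<sigma>"
        unfolding real_face_def by blast+
      interpret carrier_point S p using S p by unfold_locales
      show ?thesis using prism_support_subset[of r f g t] sub unfolding support_def by blast
    qed
    then show "\<exists>F. finite F \<and> (\<forall>t\<in>{0..1}. \<forall>p\<in>real_face S \<sigma>. {v. prism r f g (t,p) v \<noteq> 0} \<subseteq> F)
        \<and> continuous_map (prod_topology (top_of_set {0..1}) (subtopology (powertop_real UNIV) (real_face S \<sigma>)))
             (powertop_real UNIV) (prism r f g)"
      using simplicial_complex_finite[OF S \<sigma>] continuous_map_prism[OF S \<sigma>]
      by (intro exI[of _ "f ` \<sigma> \<union> g ` \<sigma>"] conjI) auto
  qed
  then have "homotopic_with (\<lambda>_. True) (realisation S) (realisation S)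
      (\<lambda>p. prism r f g (0,p)) (\<lambda>p. prism r f g (1,p))"
    unfolding homotopic_with_def by blast
  then show ?thesis
  proof (rule homotopic_with_eq)
    fix p assume "p \<in> topspace (realisation S)"
    then have "p \<in> real_carrier S" by (simp add: topspace_realisation)
    then interpret carrier_point S p using S by unfold_locales
    show "realise_map f p = prism r f g (0,p)" "realise_map g p = prism r f g (1,p)"
      by (rule prism_0[symmetric], rule prism_1[symmetric])
  qed simp
qed

lemma realise_map_id: "realise_map id = id"
proof (intro ext)
  fix p :: "'v \<Rightarrow> real" and v :: 'v
  have "{x. p x \<noteq> 0 \<and> id x = v} = (if p v = 0 then {} else {v})" by auto
  then show "realise_map id p v = id p v" by (simp add: realise_map_def)
qed

lemma realise_map_const:
  "p \<in> real_carrier S \<Longrightarrow> realise_map (\<lambda>_. w) p = (\<lambda>v. if v = w then 1 else 0)"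
  by (auto simp: realise_map_def real_carrier_def fun_eq_iff)

text \<open>The prisms deform the identity through \<open>g\<close> to the vertex \<open>w\<close>.\<close>
lemma contractible_realisation:
  fixes S :: "'v set set" and g :: "'v \<Rightarrow> 'v"
  assumes S: "simplicial_complex S" and "trans r"
    and total: "\<And>\<sigma> x y. \<sigma> \<in> S \<Longrightarrow> x \<in> \<sigma> \<Longrightarrow> y \<in> \<sigma> \<Longrightarrow> x \<noteq> y \<Longrightarrow> (x,y) \<in> r \<or> (y,x) \<in> r"
    and later: "\<And>\<sigma> P Q. \<sigma> \<in> S \<Longrightarrow> P \<subseteq> \<sigma> \<Longrightarrow> Q \<subseteq> \<sigma> \<Longrightarrow> (\<forall>x\<in>P. \<forall>y\<in>Q. x = y \<or> (x,y) \<in> r) \<Longrightarrow>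
                P \<union> Q \<noteq> {} \<Longrightarrow> P \<union> g ` Q \<in> S"
    and cone: "\<And>\<sigma>. \<sigma> \<in> S \<Longrightarrow> insert w (g ` \<sigma>) \<in> S"
  shows "contractible_space (realisation S)"
proof -
  let ?X = "realisation S"
  have "homotopic_with (\<lambda>_. True) ?X ?X (realise_map id) (realise_map g)"
  proof (rule homotopic_realise_maps[OF S \<open>trans r\<close> total])
    fix \<sigma> P Q assume "\<sigma> \<in> S" "P \<subseteq> \<sigma>" "Q \<subseteq> \<sigma>" "\<forall>x\<in>P. \<forall>y\<in>Q. x = y \<or> (x,y) \<in> r" "P \<union> Q \<noteq> {}"
    then show "id ` P \<union> g ` Q \<in> S" using later[of \<sigma> P Q] by simp
  qed
  then have "homotopic_with (\<lambda>_. True) ?X ?X id (realise_map g)"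
    unfolding realise_map_id .
  moreover have "homotopic_with (\<lambda>_. True) ?X ?X (realise_map g) (realise_map (\<lambda>_. w))"
  proof (rule homotopic_realise_maps[OF S \<open>trans r\<close> total])
    fix \<sigma> P Q assume "\<sigma> \<in> S" "P \<subseteq> \<sigma>" "P \<union> Q \<noteq> {}"
    then have "g ` P \<union> (\<lambda>_. w) ` Q \<subseteq> insert w (g ` \<sigma>)" "g ` P \<union> (\<lambda>_. w) ` Q \<noteq> {}"
      by auto
    then show "g ` P \<union> (\<lambda>_. w) ` Q \<in> S"
      by (rule simplicial_complex_subset[OF S cone[OF \<open>\<sigma> \<in> S\<close>]])
  qed
  then have "homotopic_with (\<lambda>_. True) ?X ?X (realise_map g) (\<lambda>_. \<lambda>v. if v = w then 1 else 0)"
    by (rule homotopic_with_eq) (auto simp: topspace_realisation realise_map_const)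
  ultimately have "homotopic_with (\<lambda>_. True) ?X ?X id (\<lambda>_. \<lambda>v. if v = w then 1 else 0)"
    by (rule homotopic_with_trans)
  then show ?thesis unfolding contractible_space_def by blast
qed

section \<open>Cardinal bounds and transfinite choice\<close>

lemma card_of_finite_ordLess_infinite: "finite A \<Longrightarrow> \<not> finite B \<Longrightarrow> |A| <o |B|"
  using finite_ordLess_infinite[OF card_of_Well_order card_of_Well_order] by (simp add: Field_card_of)

lemma card_of_lists_length_le:
  assumes inf: "\<not> finite X"
  shows "|{xs \<in> lists X. length xs = k}| \<le>o |X|"
proof (induction k)
  case 0
  have "finite {xs \<in> lists X. length xs = 0}" by simp
  then show ?case using card_of_finite_ordLess_infinite[OF _ inf] ordLess_imp_ordLeq by blast
next
  case (Suc k)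
  have e: "{xs \<in> lists X. length xs = Suc k} = (\<lambda>(x,xs). x # xs) ` (X \<times> {xs \<in> lists X. length xs = k})"
  proof (intro set_eqI iffI)
    fix ys assume "ys \<in> {xs \<in> lists X. length xs = Suc k}"
    then obtain x xs where "ys = x # xs" "x \<in> X" "xs \<in> lists X" "length xs = k"
      by (cases ys) auto
    then show "ys \<in> (\<lambda>(x,xs). x # xs) ` (X \<times> {xs \<in> lists X. length xs = k})" by force
  qed auto
  have "|{xs \<in> lists X. length xs = Suc k}| \<le>o |X \<times> {xs \<in> lists X. length xs = k}|"
    unfolding e by (rule card_of_image)
  also have "|X \<times> {xs \<in> lists X. length xs = k}| \<le>o |X \<times> X|"
    by (rule card_of_Times_mono2[OF Suc.IH])
  also have "|X \<times> X| \<le>o |X|"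
    using card_of_Times_same_infinite[OF inf] ordIso_iff_ordLeq by blast
  finally show ?case .
qed

lemma card_of_lists_le:
  assumes inf: "\<not> finite X"
  shows "|lists X| \<le>o |X|"
proof -
  have "lists X = (\<Union>k. {xs \<in> lists X. length xs = k})" by auto
  moreover have "|\<Union>k. {xs \<in> lists X. length xs = k}| \<le>o |X|"
  proof (rule card_of_UNION_ordLeq_infinite[OF inf])
    show "|UNIV::nat set| \<le>o |X|" using inf infinite_iff_card_of_nat by blast
    show "\<forall>k\<in>UNIV. |{xs \<in> lists X. length xs = k}| \<le>o |X|" using card_of_lists_length_le[OF inf] by blast
  qed
  ultimately show ?thesis by simp
qed

lemma card_of_finite_subsets_le:
  assumes inf: "\<not> finite X"
  shows "|{Z. Z \<subseteq> X \<and> finite Z}| \<le>o |X|"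
proof -
  have "{Z. Z \<subseteq> X \<and> finite Z} \<subseteq> set ` lists X"
  proof
    fix Z assume "Z \<in> {Z. Z \<subseteq> X \<and> finite Z}"
    then have Z: "finite Z" "Z \<subseteq> X" by simp_all
    then obtain xs where xs: "set xs = Z" using finite_list by blast
    then have "xs \<in> lists X" using Z by auto
    then show "Z \<in> set ` lists X" using xs by blast
  qed
  then have "|{Z. Z \<subseteq> X \<and> finite Z}| \<le>o |set ` lists X|" by (rule card_of_mono1)
  also have "|set ` lists X| \<le>o |lists X|" by (rule card_of_image)
  also have "|lists X| \<le>o |X|" by (rule card_of_lists_le[OF inf])
  finally show ?thesis .
qed

lemma UNION_finite_ne_UNIV:
  fixes B :: "'c set \<Rightarrow> 'b set"
  assumes inf: "\<not> finite (UNIV :: 'b set)" and X: "|X| <o |UNIV :: 'b set|"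
    and Zs: "\<ZZ> \<subseteq> {Z. Z \<subseteq> X \<and> finite Z}" and fB: "\<And>Z. Z \<in> \<ZZ> \<Longrightarrow> finite (B Z)"
  shows "(\<Union>Z\<in>\<ZZ>. B Z) \<noteq> UNIV"
proof -
  have "|\<Union>Z\<in>\<ZZ>. B Z| <o |UNIV :: 'b set|"
  proof (cases "finite X")
    case True
    have "finite {Z. Z \<subseteq> X}" using True by simp
    moreover have "\<ZZ> \<subseteq> {Z. Z \<subseteq> X}" using Zs by blast
    ultimately have "finite \<ZZ>" using finite_subset by blast
    then have "finite (\<Union>Z\<in>\<ZZ>. B Z)" using fB by blast
    then show ?thesis using card_of_finite_ordLess_infinite inf by blast
  next
    case False
    have "|\<ZZ>| \<le>o |X|" using card_of_mono1[OF Zs] card_of_finite_subsets_le[OF False] ordLeq_transitive by blast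
    moreover have "\<forall>Z\<in>\<ZZ>. |B Z| \<le>o |X|" using fB card_of_finite_ordLess_infinite[OF _ False] ordLess_imp_ordLeq by blast
    ultimately have "|\<Union>Z\<in>\<ZZ>. B Z| \<le>o |X|" by (rule card_of_UNION_ordLeq_infinite[OF False])
    then show ?thesis using X ordLeq_ordLess_trans by blast
  qed
  then show ?thesis using ordLess_irreflexive[of "|UNIV::'b set|"] by force
qed

lemma wf_recursive_choice:
  assumes "wf R"
    and exists: "\<And>h y. \<exists>m. P h y m"
    and depends: "\<And>h h' y m. (\<And>x. (x,y) \<in> R \<Longrightarrow> h x = h' x) \<Longrightarrow> P h y m \<Longrightarrow> P h' y m"
  obtains g where "\<And>y. P g y (g y)"
proof -
  define g where "g = wfrec R (\<lambda>h y. SOME m. P h y m)"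
  have "P g y (g y)" for y
  proof -
    have "g y = (SOME m. P (cut g R y) y m)"
      unfolding g_def by (subst wfrec[OF \<open>wf R\<close>]) simp
    then have "P (cut g R y) y (g y)" using someI_ex[OF exists] by simp
    then show ?thesis by (rule depends[rotated]) (simp add: cut_apply)
  qed
  then show thesis by (rule that)
qed

lemma finite_chain_has_greatest:
  assumes "finite C" "C \<noteq> {}" "trans r" "\<forall>x\<in>C. \<forall>y\<in>C. x \<noteq> y \<longrightarrow> (x,y) \<in> r \<or> (y,x) \<in> r"
  shows "\<exists>y\<in>C. \<forall>y'\<in>C. y' = y \<or> (y',y) \<in> r"
  using assms
proof (induction C rule: finite_ne_induct)
  case (singleton x) then show ?case by blast
next
  case (insert x F)
  then obtain m where m: "m \<in> F" "\<forall>y'\<in>F. y' = m \<or> (y',m) \<in> r" by blast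
  show ?case
  proof (cases "x = m \<or> (x,m) \<in> r")
    case True then show ?thesis using m by blast
  next
    case False
    then have "(m,x) \<in> r" using insert.prems(2) m(1) by blast
    then have "\<forall>y'\<in>insert x F. y' = x \<or> (y',x) \<in> r"
      using m(2) \<open>trans r\<close> by (auto intro: transD)
    then show ?thesis by blast
  qed
qed

section \<open>Vectors in general position\<close>

context vector_space
begin

text \<open>Some \<open>b\<^sub>j\<close> lies outside \<open>span Z\<close>; a coordinate \<open>e\<close> of \<open>b\<^sub>j\<close> with respect to a basis extending \<open>Z\<close>
  vanishes on \<open>span Z\<close>, and along the curve it is a polynomial in \<open>x\<close> with \<open>x\<^sup>j\<close>-coefficient
  nonzero.\<close>
lemma finite_curve_points_in_span:
  assumes bs: "distinct bs" "independent (set bs)"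
    and Z: "finite Z" "independent Z" "card Z < length bs"
  shows "finite {x. (\<Sum>i<length bs. scale (x ^ i) (bs ! i)) \<in> span Z}"
proof -
  obtain b where b: "b \<in> set bs" "b \<notin> span Z"
  proof (rule ccontr)
    assume "\<not> thesis"
    then have "set bs \<subseteq> span Z" using that by blast
    then have "card (set bs) \<le> card Z" using independent_span_bound[OF Z(1) bs(2)] by blast
    then show False using Z(3) distinct_card[OF bs(1)] by simp
  qed
  define E where "E = extend_basis Z"
  have E: "independent E" "Z \<subseteq> E" "span E = UNIV"
    unfolding E_def using Z(2) by (auto simp: independent_extend_basis extend_basis_superset)
  define R where "R v = representation E v" for v
  obtain e where e: "e \<notin> Z" "R b e \<noteq> 0"
  proof (rule ccontr)
    assume "\<not> thesis"
    then have sub: "{x. R b x \<noteq> 0} \<subseteq> Z" using that by blast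
    have "b = (\<Sum>x | R b x \<noteq> 0. scale (R b x) x)"
      unfolding R_def using sum_nonzero_representation_eq[OF E(1), of b] E(3) by simp
    also have "\<dots> \<in> span Z"
      by (rule span_sum) (use sub in \<open>auto intro: span_scale span_base\<close>)
    finally show False using b by simp
  qed
  have vanish: "R v e = 0" if "v \<in> span Z" for v
  proof -
    have "R v = representation Z v" unfolding R_def by (rule representation_extend[OF E(1) that E(2)])
    then show ?thesis using e(1) representation_ne_zero[of Z v e] by auto
  qed
  define p where "p = (\<Sum>i<length bs. monom (R (bs ! i) e) i)"
  have coord: "R (\<Sum>i<length bs. scale (x ^ i) (bs ! i)) e = poly p x" for x
  proof -
    have "R (\<Sum>i<length bs. scale (x ^ i) (bs ! i)) = (\<lambda>y. \<Sum>i<length bs. R (scale (x ^ i) (bs ! i)) y)"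
      unfolding R_def by (rule representation_sum[OF E(1)]) (simp add: E(3))
    moreover have "R (scale (x ^ i) (bs ! i)) = (\<lambda>y. x ^ i * R (bs ! i) y)" for i
      unfolding R_def by (rule representation_scale[OF E(1)]) (simp add: E(3))
    ultimately show ?thesis unfolding p_def by (simp add: poly_sum poly_monom mult.commute)
  qed
  have "{x. (\<Sum>i<length bs. scale (x ^ i) (bs ! i)) \<in> span Z} \<subseteq> {x. poly p x = 0}"
    using vanish by (auto simp flip: coord)
  moreover obtain j where j: "j < length bs" "bs ! j = b" using b(1) by (metis in_set_conv_nth)
  then have "coeff p j \<noteq> 0"
    unfolding p_def coeff_sum using e(2) by simp
  then have "finite {x. poly p x = 0}" by (intro poly_roots_finite) auto
  ultimately show ?thesis by (rule finite_subset)
qed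

lemma independent_subset_Un_image:
  assumes "finite B" "finite Q" "trans r"
    and total: "\<And>x y. x \<in> Q \<Longrightarrow> y \<in> Q \<Longrightarrow> x \<noteq> y \<Longrightarrow> (x,y) \<in> r \<or> (y,x) \<in> r"
    and B: "\<And>Z. Z \<subseteq> B \<Longrightarrow> card Z \<le> n \<Longrightarrow> independent Z"
    and avoids: "\<And>y Z. y \<in> Q \<Longrightarrow> Z \<subseteq> B \<union> g ` {x\<in>Q. (x,y) \<in> r \<and> x \<noteq> y} \<Longrightarrow>
        independent Z \<Longrightarrow> card Z < n \<Longrightarrow> g y \<notin> span Z"
  shows "Z \<subseteq> B \<union> g ` Q \<Longrightarrow> card Z \<le> n \<Longrightarrow> independent Z"
proof (induction "card Z" arbitrary: Z rule: less_induct)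
  case less
  have "finite Z" using less.prems(1) \<open>finite B\<close> \<open>finite Q\<close> finite_subset by blast
  show ?case
  proof (cases "Z \<subseteq> B")
    case True then show ?thesis using B less.prems(2) by blast
  next
    case False
    define C where "C = {y\<in>Q. g y \<in> Z - B}"
    have "C \<noteq> {}" "finite C" using False less.prems(1) \<open>finite Q\<close> unfolding C_def by auto
    moreover have "\<forall>x\<in>C. \<forall>y\<in>C. x \<noteq> y \<longrightarrow> (x,y) \<in> r \<or> (y,x) \<in> r"
      using total unfolding C_def by blast
    ultimately obtain y where "y \<in> C" and greatest: "\<forall>y'\<in>C. y' = y \<or> (y',y) \<in> r"
      using finite_chain_has_greatest[OF _ _ \<open>trans r\<close>] by blast
    then have y: "y \<in> Q" "g y \<in> Z - B" unfolding C_def by blast+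
    define Z' where "Z' = Z - {g y}"
    have smaller: "card Z' < card Z" unfolding Z'_def using \<open>finite Z\<close> y(2) by (meson DiffD1 card_Diff1_less)
    have Z': "Z' \<subseteq> B \<union> g ` {x\<in>Q. (x,y) \<in> r \<and> x \<noteq> y}"
    proof
      fix z assume z: "z \<in> Z'"
      show "z \<in> B \<union> g ` {x\<in>Q. (x,y) \<in> r \<and> x \<noteq> y}"
      proof (cases "z \<in> B")
        case False
        then obtain y' where y': "y' \<in> Q" "z = g y'" using z less.prems(1) unfolding Z'_def by blast
        then have "y' \<in> C" "y' \<noteq> y" using z False unfolding C_def Z'_def by blast+
        then have "(y',y) \<in> r" using greatest by blast
        then show ?thesis using y' \<open>y' \<noteq> y\<close> by blast
      qed simp
    qed
    have "card Z' < n" using smaller less.prems(2) by linarith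
    have "independent Z'"
      using less.hyps[OF smaller] Z' \<open>card Z' < n\<close> by auto
    then have "independent (insert (g y) Z')"
      using avoids[OF y(1) Z' _ \<open>card Z' < n\<close>] by (intro independent_insertI)
    moreover have "insert (g y) Z' = Z" using y(2) unfolding Z'_def by blast
    ultimately show ?thesis by simp
  qed
qed

end

lemma emb_mult: "emb (a * b) = emb a * emb b"
  by (simp add: emb_def)

lemma emb_one: "emb 1 = 1"
  by (simp add: emb_def One_fract_def)

lemma emb_power: "emb (a ^ i) = emb a ^ i"
  by (induction i) (simp_all add: emb_one emb_mult)

lemma inj_emb: "inj emb"
  by (rule injI) (simp add: emb_def eq_fract)

lemma infinite_UNIV_of_infinite_fract:
  assumes "infinite (UNIV :: 'r::idom fract set)"
  shows "infinite (UNIV :: 'r set)"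
proof
  assume "finite (UNIV :: 'r set)"
  moreover have "(UNIV :: 'r fract set) \<subseteq> (\<lambda>(a,b). Fract a b) ` (UNIV \<times> UNIV)"
  proof
    fix q :: "'r fract"
    show "q \<in> (\<lambda>(a,b). Fract a b) ` (UNIV \<times> UNIV)" by (cases q) auto
  qed
  ultimately show False using assms by (metis finite_SigmaI finite_imageI finite_subset)
qed

locale generic_successor = vector_space scale
  for scale :: "'k::field \<Rightarrow> 'v::ab_group_add \<Rightarrow> 'v" +
  fixes M :: "'v set" and r :: "('v \<times> 'v) set" and w :: 'v and g :: "'v \<Rightarrow> 'v"
  assumes trans: "trans r"
    and total: "\<And>x y. x \<in> M \<Longrightarrow> y \<in> M \<Longrightarrow> x \<noteq> y \<Longrightarrow> (x,y) \<in> r \<or> (y,x) \<in> r"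
    and w: "w \<in> M" "w \<noteq> 0"
    and g_M: "g ` M \<subseteq> M"
    and avoids: "\<And>y Z. y \<in> M \<Longrightarrow> Z \<subseteq> insert w (insert y (underS r y \<union> g ` underS r y)) \<Longrightarrow>
        finite Z \<Longrightarrow> independent Z \<Longrightarrow> card Z < dim M \<Longrightarrow> g y \<notin> span Z"
begin

lemma gp_simplices_iff: "Y \<in> gp_simplices scale M \<longleftrightarrow>
    Y \<noteq> {} \<and> finite Y \<and> Y \<subseteq> M \<and> (\<forall>Z\<subseteq>Y. card Z \<le> dim M \<longrightarrow> independent Z)"
  unfolding gp_simplices_def by simp

lemma simplicial_complex_gp_simplices: "simplicial_complex (gp_simplices scale M)"
  unfolding simplicial_complex_def
proof (intro ballI conjI allI impI)
  fix \<sigma> \<tau> assume "\<sigma> \<in> gp_simplices scale M" "\<tau> \<subseteq> \<sigma> \<and> \<tau> \<noteq> {}"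
  then show "\<tau> \<in> gp_simplices scale M"
    unfolding gp_simplices_iff by (meson finite_subset order_trans)
qed (auto simp: gp_simplices_iff)

lemma gp_simplex_Un_image:
  assumes "finite B" "B \<subseteq> M" "finite Q" "Q \<subseteq> M" "B \<union> Q \<noteq> {}"
    and B: "\<And>Z. Z \<subseteq> B \<Longrightarrow> card Z \<le> dim M \<Longrightarrow> independent Z"
    and earlier: "\<And>x y. x \<in> B \<Longrightarrow> y \<in> Q \<Longrightarrow> x \<in> insert w (insert y (underS r y))"
  shows "B \<union> g ` Q \<in> gp_simplices scale M"
proof -
  have "independent Z" if "Z \<subseteq> B \<union> g ` Q" "card Z \<le> dim M" for Z
  proof (rule independent_subset_Un_image[OF \<open>finite B\<close> \<open>finite Q\<close> trans _ B _ that])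
    show "(x,y) \<in> r \<or> (y,x) \<in> r" if "x \<in> Q" "y \<in> Q" "x \<noteq> y" for x y
      using total that \<open>Q \<subseteq> M\<close> by blast
  next
    fix y Z assume y: "y \<in> Q" and Z: "Z \<subseteq> B \<union> g ` {x\<in>Q. (x,y) \<in> r \<and> x \<noteq> y}"
      and "independent Z" "card Z < dim M"
    have "{x\<in>Q. (x,y) \<in> r \<and> x \<noteq> y} \<subseteq> underS r y" by (auto simp: underS_def)
    moreover have "B \<subseteq> insert w (insert y (underS r y))" using earlier y by blast
    ultimately have "Z \<subseteq> insert w (insert y (underS r y \<union> g ` underS r y))"
      using Z by blast
    moreover have "finite Z"
      using finite_subset[OF Z] \<open>finite B\<close> \<open>finite Q\<close> by simp
    moreover have "y \<in> M" using y \<open>Q \<subseteq> M\<close> by blast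
    ultimately show "g y \<notin> span Z"
      using avoids \<open>independent Z\<close> \<open>card Z < dim M\<close> by simp
  qed
  moreover have "B \<union> g ` Q \<subseteq> M" using \<open>B \<subseteq> M\<close> \<open>Q \<subseteq> M\<close> g_M by blast
  moreover have "B \<union> g ` Q \<noteq> {}" using \<open>B \<union> Q \<noteq> {}\<close> by blast
  ultimately show ?thesis
    unfolding gp_simplices_iff using \<open>finite B\<close> \<open>finite Q\<close> by simp
qed

lemma gp_simplex_Un_image_later:
  assumes \<sigma>: "\<sigma> \<in> gp_simplices scale M" and "P \<subseteq> \<sigma>" "Q \<subseteq> \<sigma>" "P \<union> Q \<noteq> {}"
    and later: "\<forall>x\<in>P. \<forall>y\<in>Q. x = y \<or> (x,y) \<in> r"
  shows "P \<union> g ` Q \<in> gp_simplices scale M"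
proof (rule gp_simplex_Un_image)
  have "finite \<sigma>" "\<sigma> \<subseteq> M" using \<sigma> by (auto simp: gp_simplices_iff)
  then show "finite P" "P \<subseteq> M" "finite Q" "Q \<subseteq> M"
    using \<open>P \<subseteq> \<sigma>\<close> \<open>Q \<subseteq> \<sigma>\<close> finite_subset by blast+
  show "independent Z" if "Z \<subseteq> P" "card Z \<le> dim M" for Z
    using \<sigma> that \<open>P \<subseteq> \<sigma>\<close> unfolding gp_simplices_iff by blast
  show "x \<in> insert w (insert y (underS r y))" if "x \<in> P" "y \<in> Q" for x y
    using later that unfolding underS_def by blast
qed fact

lemma gp_simplex_insert_image:
  assumes \<sigma>: "\<sigma> \<in> gp_simplices scale M"
  shows "insert w (g ` \<sigma>) \<in> gp_simplices scale M"
proof -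
  have "{w} \<union> g ` \<sigma> \<in> gp_simplices scale M"
  proof (rule gp_simplex_Un_image)
    show "finite \<sigma>" "\<sigma> \<subseteq> M" using \<sigma> by (auto simp: gp_simplices_iff)
    show "independent Z" if "Z \<subseteq> {w}" for Z
      using that w(2) by (cases "Z = {}") (auto simp: subset_singleton_iff independent_empty)
  qed (use w(1) in auto)
  then show ?thesis by simp
qed

theorem contractible_gp_simplices: "contractible_space (realisation (gp_simplices scale M))"
proof (rule contractible_realisation[OF simplicial_complex_gp_simplices trans])
  show "(x,y) \<in> r \<or> (y,x) \<in> r" if "\<sigma> \<in> gp_simplices scale M" "x \<in> \<sigma>" "y \<in> \<sigma>" "x \<noteq> y" for \<sigma> x y
    using total that unfolding gp_simplices_iff by blast
  show "P \<union> g ` Q \<in> gp_simplices scale M"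
    if "\<sigma> \<in> gp_simplices scale M" "P \<subseteq> \<sigma>" "Q \<subseteq> \<sigma>" "\<forall>x\<in>P. \<forall>y\<in>Q. x = y \<or> (x,y) \<in> r" "P \<union> Q \<noteq> {}"
    for \<sigma> P Q
    by (rule gp_simplex_Un_image_later[OF that(1-3,5,4)])
  show "insert w (g ` \<sigma>) \<in> gp_simplices scale M" if "\<sigma> \<in> gp_simplices scale M" for \<sigma>
    using that by (rule gp_simplex_insert_image)
qed

end

locale general_position_module = vector_space sc
  for sc :: "'r::idom fract \<Rightarrow> 'v::ab_group_add \<Rightarrow> 'v" +
  fixes M :: "'v set"
  assumes submodule: "A_submodule sc M" and fin_gen: "A_fin_gen sc M"
    and infinite_ring: "infinite (UNIV :: 'r set)"
begin

lemma sum_in_M: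
  assumes "finite I" "\<And>i. i \<in> I \<Longrightarrow> f i \<in> M"
  shows "sum f I \<in> M"
  using assms by (induction I rule: finite_induct) (use submodule in \<open>auto simp: A_submodule_def\<close>)

lemma scale_in_M: "x \<in> M \<Longrightarrow> sc (emb a) x \<in> M"
  using submodule unfolding A_submodule_def by blast

lemma card_of_M_le: "|M| \<le>o |UNIV :: 'r set|"
proof -
  obtain F where "finite F" and M: "M = {\<Sum>x\<in>F. sc (emb (c x)) x | c. True}"
    using fin_gen unfolding A_fin_gen_def by blast
  then obtain xs where xs: "set xs = F" "distinct xs" using finite_distinct_list by blast
  define \<phi> where "\<phi> cs = (\<Sum>i<length xs. sc (emb (cs ! i)) (xs ! i))" for cs :: "'r list"
  have "M \<subseteq> \<phi> ` lists UNIV"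
  proof
    fix m assume "m \<in> M"
    then obtain c where m: "m = (\<Sum>x\<in>F. sc (emb (c x)) x)" using M by blast
    have "m = (\<Sum>i<length xs. sc (emb (c (xs ! i))) (xs ! i))"
      unfolding m xs(1)[symmetric] sum_list_distinct_conv_sum_set[OF xs(2), symmetric]
      by (simp add: sum_list_sum_nth atLeast0LessThan)
    also have "\<dots> = \<phi> (map c xs)" unfolding \<phi>_def by simp
    finally show "m \<in> \<phi> ` lists UNIV" by blast
  qed
  then have "|M| \<le>o |\<phi> ` lists UNIV|" by (rule card_of_mono1)
  also have "|\<phi> ` lists UNIV| \<le>o |lists (UNIV :: 'r set)|" by (rule card_of_image)
  also have "|lists (UNIV :: 'r set)| \<le>o |UNIV :: 'r set|" using card_of_lists_le infinite_ring by blast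
  finally show ?thesis .
qed

lemma finite_basis_of_M:
  obtains B where "B \<subseteq> M" "independent B" "finite B" "card B = dim M"
proof -
  obtain F where F: "finite F" "F \<subseteq> M" and M: "M = {\<Sum>x\<in>F. sc (emb (c x)) x | c. True}"
    using fin_gen unfolding A_fin_gen_def by blast
  obtain B where B: "B \<subseteq> M" "independent B" "M \<subseteq> span B" "card B = dim M"
    by (rule basis_exists)
  have "M \<subseteq> span F" unfolding M by (auto intro: span_sum span_scale span_base)
  then have "finite B" using independent_span_bound[OF F(1) B(2)] B(1) by blast
  then show thesis using that B by blast
qed

lemma exists_avoiding_spans:
  assumes X: "|X| <o |UNIV :: 'r set|"
  shows "\<exists>m\<in>M. \<forall>Z. Z \<subseteq> X \<longrightarrow> finite Z \<longrightarrow> independent Z \<longrightarrow> card Z < dim M \<longrightarrow> m \<notin> span Z"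
proof -
  obtain B where B: "B \<subseteq> M" "independent B" "finite B" "card B = dim M"
    by (rule finite_basis_of_M)
  obtain bs where bs: "set bs = B" "distinct bs" using finite_distinct_list[OF B(3)] by blast
  then have len: "length bs = dim M" using B(4) distinct_card by fastforce
  define curve where "curve a = (\<Sum>i<length bs. sc (emb a ^ i) (bs ! i))" for a
  have curve_M: "curve a \<in> M" for a
    unfolding curve_def using bs(1) B(1)
    by (intro sum_in_M) (auto simp: emb_power[symmetric] intro!: scale_in_M)
  define \<ZZ> where "\<ZZ> = {Z. Z \<subseteq> X \<and> finite Z \<and> independent Z \<and> card Z < dim M}"
  have "finite {a. curve a \<in> span Z}" if "Z \<in> \<ZZ>" for Z
  proof -
    have "finite {x. (\<Sum>i<length bs. sc (x ^ i) (bs ! i)) \<in> span Z}"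
      using that bs B(2) len unfolding \<ZZ>_def by (intro finite_curve_points_in_span) auto
    then have "finite (emb -` {x. (\<Sum>i<length bs. sc (x ^ i) (bs ! i)) \<in> span Z})"
      by (rule finite_vimageI[OF _ inj_emb])
    then show ?thesis unfolding curve_def by (simp add: vimage_def)
  qed
  then have "(\<Union>Z\<in>\<ZZ>. {a. curve a \<in> span Z}) \<noteq> UNIV"
    by (intro UNION_finite_ne_UNIV[OF infinite_ring X]) (auto simp: \<ZZ>_def)
  then obtain a where "\<forall>Z\<in>\<ZZ>. curve a \<notin> span Z" by blast
  then show ?thesis using curve_M unfolding \<ZZ>_def by blast
qed

lemma card_of_successor_context:
  assumes "y \<in> M"
  shows "|insert w (insert y (underS (card_of M) y \<union> h ` underS (card_of M) y))| <o |UNIV :: 'r set|"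
proof -
  have "|underS (card_of M) y| <o |M|"
    using card_of_underS[OF card_of_Card_order, of y M] assms by (simp add: Field_card_of)
  also have "|M| \<le>o |UNIV :: 'r set|" by (rule card_of_M_le)
  finally have U: "|underS (card_of M) y| <o |UNIV :: 'r set|" .
  have "|h ` underS (card_of M) y| <o |UNIV :: 'r set|"
    by (rule ordLeq_ordLess_trans[OF card_of_image U])
  moreover have "|{y, w}| <o |UNIV :: 'r set|"
    by (rule card_of_finite_ordLess_infinite[OF _ infinite_ring]) simp
  moreover have "insert w (insert y (underS (card_of M) y \<union> h ` underS (card_of M) y))
      = (underS (card_of M) y \<union> h ` underS (card_of M) y) \<union> {y, w}"
    by blast
  ultimately show ?thesis
    using U by (simp only:) (intro card_of_Un_ordLess_infinite[OF infinite_ring])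
qed

lemma exists_generic_successor:
  obtains g where "g ` M \<subseteq> M"
    and "\<And>y Z. y \<in> M \<Longrightarrow> Z \<subseteq> insert w (insert y (underS (card_of M) y \<union> g ` underS (card_of M) y)) \<Longrightarrow>
        finite Z \<Longrightarrow> independent Z \<Longrightarrow> card Z < dim M \<Longrightarrow> g y \<notin> span Z"
proof -
  define P where "P h y m \<longleftrightarrow> y \<in> M \<longrightarrow> m \<in> M \<and>
      (\<forall>Z. Z \<subseteq> insert w (insert y (underS (card_of M) y \<union> h ` underS (card_of M) y)) \<longrightarrow>
      finite Z \<longrightarrow> independent Z \<longrightarrow> card Z < dim M \<longrightarrow> m \<notin> span Z)" for h y m
  have wf: "wf (card_of M - Id)" using wo_rel.WF card_of_Well_order unfolding wo_rel_def by blast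
  have exists: "\<exists>m. P h y m" for h y
  proof (cases "y \<in> M")
    case True
    then show ?thesis
      using exists_avoiding_spans[OF card_of_successor_context[OF True]] unfolding P_def by blast
  qed (simp add: P_def)
  obtain g where g: "\<And>y. P g y (g y)"
  proof (rule wf_recursive_choice[OF wf exists])
    fix h h' y m assume "\<And>x. (x,y) \<in> card_of M - Id \<Longrightarrow> h x = h' x" "P h y m"
    moreover from this(1) have "h ` underS (card_of M) y = h' ` underS (card_of M) y"
      by (auto simp: underS_def)
    ultimately show "P h' y m" unfolding P_def by simp
  qed blast
  show thesis
  proof (rule that)
    show "g ` M \<subseteq> M" using g unfolding P_def by blast
    fix y Z assume "y \<in> M" "Z \<subseteq> insert w (insert y (underS (card_of M) y \<union> g ` underS (card_of M) y))"
      "finite Z" "independent Z" "card Z < dim M"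
    then show "g y \<notin> span Z" using g[of y] unfolding P_def by blast
  qed
qed

end

theorem proposition8p1:
  fixes sc :: "'a::idom fract \<Rightarrow> 'v::ab_group_add \<Rightarrow> 'v"
    and M :: "'v set"
  assumes "noetherian TYPE('a)"
    and "infinite (UNIV :: 'a fract set)"
    and "vector_space sc"
    and "A_submodule sc M"
    and "A_fin_gen sc M"
    and "vector_space.dim sc M \<ge> 2"
  shows "contractible_space (realisation (gp_simplices sc M))"
proof -
  interpret general_position_module sc M
    using assms(3-5) infinite_UNIV_of_infinite_fract[OF assms(2)]
    by (intro general_position_module.intro general_position_module_axioms.intro)
  have "\<not> M \<subseteq> {0}"
  proof
    assume "M \<subseteq> {0}"
    then have "dim M \<le> card ({} :: 'v set)" by (intro dim_le_card) auto
    then show False using assms(6) by simp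
  qed
  then obtain w where w: "w \<in> M" "w \<noteq> 0" by blast
  obtain g where g: "g ` M \<subseteq> M"
    "\<And>y Z. y \<in> M \<Longrightarrow> Z \<subseteq> insert w (insert y (underS (card_of M) y \<union> g ` underS (card_of M) y)) \<Longrightarrow>
        finite Z \<Longrightarrow> independent Z \<Longrightarrow> card Z < dim M \<Longrightarrow> g y \<notin> span Z"
    by (rule exists_generic_successor[of w]) blast
  have wo: "wo_rel (card_of M)" using card_of_Well_order by (simp add: wo_rel_def)
  have total: "(x,y) \<in> card_of M \<or> (y,x) \<in> card_of M" if "x \<in> M" "y \<in> M" "x \<noteq> y" for x y
    using wo_rel.TOTALS[OF wo] that by (simp add: Field_card_of)
  interpret generic_successor sc M "card_of M" w g
    using assms(3) wo_rel.TRANS[OF wo] total w g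
    by (intro generic_successor.intro generic_successor_axioms.intro)
  show ?thesis by (rule contractible_gp_simplices)
qed

end
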